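(* Under the standing assumptions below, every point $u\in\mathcal P_1$ is an accumulation point of $\mathcal P_1$.
   Context: Fix $\rho_1,\rho_2,\rho_3\in(0,1)$ with $\rho_1+\rho_2+\rho_3>1$ and $\rho_i+\rho_j\le1$ for all $i\ne j$; $\mu_i=1$, $\theta:=\rho_1+\rho_2+\rho_3-1$. $A_i^0:=\{y\in\mathbb R^3: y_1+y_2+y_3=1, y_i=0, y_l\ge0\}$, $A^0:=\bigcup_iA_i^0$; for $z\in A^0\setminus A_j^0$, $f_j(z):=\sum_{i\neq j}\frac{(1-\rho_j)z_i+\rho_i z_j}{(1-\rho_j)+\theta z_j}e_i$. For $(\hat i,\hat j,\hat k)$ equal to $(1,2,3)$ or a cyclic permutation, $(1-x)e_{\hat j}+xe_{\hat k}\in A^0_{\hat i}$ is written $(x,\hat i)$. $|z-z'|_1:=\|z-z'\|/\sqrt2$. Decision points $d_1,d_2,d_3\in(0,1)$ (identified with $(d_{\hat i},\hat i)$); switching rule $\mathfrak R((x,\hat i))=\hat j$ if $x<d_{\hat i}$, $\hat k$ if $x>d_{\hat i}$, both allowed if $x=d_{\hat i}$; $\varphi(z):=f_{\mathfrak R(z)}(z)$. A trajectory is $(z(t))$ with $z(t+1)\in\varphi(z(t))$; $z$ is a pre-image of $z'$ if some trajectory from $z$ has $z(t)=z'$ for some $t\ge1$. Standing assumption: $d_1$ has infinitely many distinct pre-images, while $d_2$ and $d_3$ have only finitely many. $\mathcal P_1$ is the set consisting of $d_1$ and all its pre-images. *)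

theory Defs
  imports "HOL-Analysis.Analysis"
begin

text \<open>Points of R^3 are vectors of type real^3; coordinate i is z $ i for i = 1,2,3
  (the index type 3 is cyclic, so i+1, i+2 realise the cyclic permutations).\<close>

definition theta :: "real^3 \<Rightarrow> real" where
  "theta \<rho> = \<rho>$1 + \<rho>$2 + \<rho>$3 - 1"

definition A0i :: "3 \<Rightarrow> (real^3) set" where
  "A0i i = {y. y$1 + y$2 + y$3 = 1 \<and> y$i = 0 \<and> (\<forall>l. y$l \<ge> 0)}"

definition A0 :: "(real^3) set" where
  "A0 = (\<Union>i. A0i i)"

definition fmap :: "real^3 \<Rightarrow> 3 \<Rightarrow> real^3 \<Rightarrow> real^3" where
  "fmap \<rho> j z = (\<chi> i. if i = j then 0
      else ((1 - \<rho>$j) * z$i + \<rho>$i * z$j) / ((1 - \<rho>$j) + theta \<rho> * z$j))"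

definition pt :: "real \<Rightarrow> 3 \<Rightarrow> real^3" where
  "pt x i = (1 - x) *\<^sub>R axis (i+1) 1 + x *\<^sub>R axis (i+2) 1"

text \<open>Switching rule (set-valued: both indices allowed at a decision point).\<close>
definition switch :: "real^3 \<Rightarrow> real^3 \<Rightarrow> 3 set" where
  "switch d z = {j. \<exists>x i. 0 \<le> x \<and> x \<le> 1 \<and> z = pt x i \<and>
       ((x \<le> d$i \<and> j = i+1) \<or> (x \<ge> d$i \<and> j = i+2))}"

definition phi :: "real^3 \<Rightarrow> real^3 \<Rightarrow> real^3 \<Rightarrow> (real^3) set" where
  "phi \<rho> d z = (if z \<in> A0 then {fmap \<rho> j z | j. j \<in> switch d z \<and> z \<notin> A0i j} else {})"

definition trajectory :: "real^3 \<Rightarrow> real^3 \<Rightarrow> (nat \<Rightarrow> real^3) \<Rightarrow> bool" where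
  "trajectory \<rho> d zs \<longleftrightarrow> (\<forall>t. zs (Suc t) \<in> phi \<rho> d (zs t))"

definition preimage :: "real^3 \<Rightarrow> real^3 \<Rightarrow> real^3 \<Rightarrow> real^3 \<Rightarrow> bool" where
  "preimage \<rho> d z z' \<longleftrightarrow>
     (\<exists>zs. trajectory \<rho> d zs \<and> zs 0 = z \<and> (\<exists>t\<ge>1. zs t = z'))"

definition preimages :: "real^3 \<Rightarrow> real^3 \<Rightarrow> real^3 \<Rightarrow> (real^3) set" where
  "preimages \<rho> d z' = {z. preimage \<rho> d z z'}"

definition P1 :: "real^3 \<Rightarrow> real^3 \<Rightarrow> (real^3) set" where
  "P1 \<rho> d = insert (pt (d$1) 1) (preimages \<rho> d (pt (d$1) 1))"

end

theory Submission
  imports Defs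
begin

text \<open>In the chart \<open>(x, i)\<close> of the boundary, every branch of \<open>\<phi>\<close> is a decreasing contraction
  with a Lipschitz inverse, and \<open>\<phi>\<close> is injective. So the infinitely many pre-images of \<open>d\<^sub>1\<close>
  form a single backward orbit \<open>u\<^sub>0 = d\<^sub>1, u\<^sub>1, u\<^sub>2, \<dots>\<close> with \<open>\<phi>(u\<^sub>t\<^sub>+\<^sub>1) = u\<^sub>t\<close>.

  Accumulation propagates backwards along the orbit: points close to \<open>u\<^sub>t\<close> on the same side have
  pre-images on the same branch, close to \<open>u\<^sub>t\<^sub>+\<^sub>1\<close>. It remains to show that \<open>d\<^sub>1\<close> is an
  accumulation point. A closest pair of orbit points on a common side cannot both be mapped forward
  (that would bring them closer), so they straddle a decision point: the orbit comes back
  arbitrarily close to some \<open>d\<^sub>i\<close>. If \<open>d\<^sub>1\<close> were isolated, this would be \<open>d\<^sub>2\<close> or \<open>d\<^sub>3\<close>; limits of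
  these returns give a backward orbit of \<open>d\<^sub>i\<close>, eventually periodic because \<open>d\<^sub>i\<close> has finitely
  many pre-images. Along an even number of periods the composed branches preserve orientation and
  do not expand, so the forward orbit of a nearby point stays trapped near the cycle down to time
  \<open>0\<close>; hence the cycle passes through \<open>d\<^sub>1\<close>, and \<open>d\<^sub>1\<close> is not isolated after all.\<close>

section \<open>Saturation maps\<close>

definition saturation :: "real \<Rightarrow> real \<Rightarrow> real \<Rightarrow> real \<Rightarrow> real" where
  "saturation c a t y = c * y / (a + t * y)"

lemma saturation_diff:
  assumes "a + t * y \<noteq> 0" "a + t * y' \<noteq> 0"
  shows "saturation c a t y - saturation c a t y' = c * a * (y - y') / ((a + t * y) * (a + t * y'))"
  using assms unfolding saturation_def by (simp add: field_simps)

lemma abs_saturation_diff: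
  assumes "0 \<le> c" "0 \<le> a" "0 < a + t * y" "0 < a + t * y'"
  shows "\<bar>saturation c a t y - saturation c a t y'\<bar>
    = c * a / ((a + t * y) * (a + t * y')) * \<bar>y - y'\<bar>"
proof -
  have "saturation c a t y - saturation c a t y' = c * a / ((a + t * y) * (a + t * y')) * (y - y')"
    using saturation_diff[of a t y y' c] assms by simp
  moreover have "0 \<le> c * a / ((a + t * y) * (a + t * y'))" using assms by simp
  ultimately show ?thesis by (simp only: abs_mult abs_of_nonneg)
qed

lemma saturation_strict_mono:
  assumes "0 < c" "0 < a" "0 \<le> t" "0 \<le> y" "y < y'"
  shows "saturation c a t y < saturation c a t y'"
proof -
  have "0 < a + t * y" "0 < a + t * y'" using assms by (simp_all add: add_pos_nonneg)
  moreover have "c * a * (y - y') < 0" using assms by (simp add: mult_pos_neg)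
  ultimately have "c * a * (y - y') / ((a + t * y) * (a + t * y')) < 0"
    by (simp add: divide_neg_pos)
  then show ?thesis using saturation_diff[of a t y y' c] \<open>0 < a + t * y\<close> \<open>0 < a + t * y'\<close>
    by simp
qed

lemma saturation_pos:
  assumes "0 < c" "0 < a" "0 \<le> t" "0 < y"
  shows "0 < saturation c a t y"
  using assms unfolding saturation_def by (simp add: add_pos_nonneg)

lemma saturation_less_one:
  assumes "0 < c" "c \<le> a" "0 < t" "0 \<le> y" "y \<le> 1"
  shows "saturation c a t y < 1"
proof -
  have "c * y \<le> a" using assms by (metis mult_left_le mult_right_mono order_trans less_imp_le mult.commute)
  then have "c * y < a + t * y" using assms
    by (cases "y = 0") (simp_all add: add_strict_increasing2 order_le_less_trans)
  moreover have "0 < a + t * y" using assms by (simp add: add_pos_nonneg)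
  ultimately show ?thesis unfolding saturation_def by simp
qed

lemma saturation_contraction:
  assumes "0 < c" "c \<le> a" "0 < t" "0 < y" "0 < y'" "y \<noteq> y'"
  shows "\<bar>saturation c a t y - saturation c a t y'\<bar> < \<bar>y - y'\<bar>"
proof -
  have D: "a < a + t * y" "a < a + t * y'" using assms by simp_all
  have "0 < a" using assms by linarith
  with D have "a * a < (a + t * y) * (a + t * y')" by (intro mult_strict_mono) auto
  then have "c * a < (a + t * y) * (a + t * y')" using assms
    by (smt (verit) mult_right_mono)
  moreover have "0 < (a + t * y) * (a + t * y')" using D \<open>0 < a\<close> by simp
  ultimately have "c * a / ((a + t * y) * (a + t * y')) < 1" by simp
  moreover have "\<bar>saturation c a t y - saturation c a t y'\<bar>
      = c * a / ((a + t * y) * (a + t * y')) * \<bar>y - y'\<bar>"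
    using abs_saturation_diff[of c a t y y'] D assms by simp
  moreover have "0 < \<bar>y - y'\<bar>" using assms by simp
  ultimately show ?thesis by (metis mult_strict_right_mono mult_1_left)
qed

lemma saturation_inverse_lipschitz:
  assumes "0 < c" "0 < a" "0 \<le> t" "0 \<le> y" "y \<le> 1" "0 \<le> y'" "y' \<le> 1"
  shows "\<bar>y - y'\<bar> \<le> (a + t)\<^sup>2 / (c * a) * \<bar>saturation c a t y - saturation c a t y'\<bar>"
proof -
  define D where "D = (a + t * y) * (a + t * y')"
  have "a \<le> a + t * y" "a + t * y \<le> a + t" "a \<le> a + t * y'" "a + t * y' \<le> a + t"
    using assms by (auto simp: mult_left_le)
  then have D: "0 < D" "D \<le> (a + t)\<^sup>2"
    unfolding D_def power2_eq_square using assms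
    by (auto intro!: mult_mono mult_pos_pos simp: add_pos_nonneg)
  have "\<bar>saturation c a t y - saturation c a t y'\<bar> = c * a / D * \<bar>y - y'\<bar>"
    using abs_saturation_diff[of c a t y y'] assms unfolding D_def by (simp add: add_pos_nonneg)
  moreover have "1 \<le> (a + t)\<^sup>2 / (c * a) * (c * a / D)"
  proof -
    have "(a + t)\<^sup>2 / (c * a) * (c * a / D) = (a + t)\<^sup>2 / D" using assms by simp
    then show ?thesis using D by simp
  qed
  then have "1 * \<bar>y - y'\<bar> \<le> (a + t)\<^sup>2 / (c * a) * (c * a / D) * \<bar>y - y'\<bar>"
    by (rule mult_right_mono) simp
  ultimately show ?thesis by (simp only: mult_1_left mult.assoc)
qed

lemma isCont_saturation: "a + t * y \<noteq> 0 \<Longrightarrow> isCont (saturation c a t) y"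
  unfolding saturation_def[abs_def] by (intro continuous_intros) auto

section \<open>Periodic, alternating and clustering sequences\<close>

lemma shifted_eq_if_eq:
  fixes u :: "nat \<Rightarrow> 'a"
  assumes succ: "\<And>k l. u k = u l \<Longrightarrow> u (Suc k) = u (Suc l)" and "u a = u b"
  shows "u (a + m) = u (b + m)"
proof (induction m)
  case (Suc m)
  then show ?case using succ[OF Suc.IH] by simp
qed (use assms in simp)

lemma finite_range_if_repeats:
  fixes u :: "nat \<Rightarrow> 'a"
  assumes succ: "\<And>k l. u k = u l \<Longrightarrow> u (Suc k) = u (Suc l)" and "u a = u b" "a < b"
  shows "finite (range u)"
proof -
  have "u n \<in> u ` {..<b}" for n
  proof (induction n rule: less_induct)
    case (less n)
    show ?case
    proof (cases "n < b")
      case False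
      then have "u n = u (a + (n - b))" using shifted_eq_if_eq[OF succ assms(2), of "n - b"] by simp
      moreover have "a + (n - b) < n" using False assms(3) by simp
      ultimately show ?thesis using less by simp
    qed simp
  qed
  then have "range u \<subseteq> u ` {..<b}" by blast
  then show ?thesis using finite_surj by blast
qed

lemma eventually_periodic_if_finite_range:
  fixes u :: "nat \<Rightarrow> 'a"
  assumes succ: "\<And>k l. u k = u l \<Longrightarrow> u (Suc k) = u (Suc l)" and "finite (range u)"
  obtains k P where "0 < P" "\<And>m. k \<le> m \<Longrightarrow> u (m + P) = u m"
proof -
  have "\<not> inj u" using assms(2) finite_imageD infinite_UNIV_nat by blast
  then obtain a b where "u a = u b" "a < b"
    unfolding inj_def by (metis linorder_neqE_nat)
  show thesis
  proof
    show "0 < b - a" using \<open>a < b\<close> by simp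
    fix m assume "a \<le> m"
    then have "m + (b - a) = b + (m - a)" "m = a + (m - a)" using \<open>a < b\<close> by simp_all
    then show "u (m + (b - a)) = u m"
      using shifted_eq_if_eq[OF succ \<open>u a = u b\<close>, of "m - a"] by metis
  qed
qed

lemma alternating_nonexpanding_even:
  fixes D :: "nat \<Rightarrow> real"
  assumes "\<And>m. m < n \<Longrightarrow> 0 \<le> D m \<Longrightarrow> D (Suc m) \<le> 0"
    and "\<And>m. m < n \<Longrightarrow> D m \<le> 0 \<Longrightarrow> 0 \<le> D (Suc m)"
    and "\<And>m. m < n \<Longrightarrow> \<bar>D (Suc m)\<bar> \<le> \<bar>D m\<bar>" and "even n"
  shows "D n \<in> closed_segment 0 (D 0)"
proof -
  have "m \<le> n \<Longrightarrow> (-1) ^ m * D m \<in> closed_segment 0 (D 0)" for m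
  proof (induction m)
    case (Suc m)
    then have m: "m < n" and IH: "(-1) ^ m * D m \<in> closed_segment 0 (D 0)" by auto
    have "(-1) ^ Suc m * D (Suc m) \<in> closed_segment 0 ((-1) ^ m * D m)"
      using assms(1-3)[OF m] by (cases "even m") (auto simp: closed_segment_eq_real_ivl)
    with IH show ?case using subset_closed_segment by blast
  qed simp
  from this[of n] show ?thesis using \<open>even n\<close> by simp
qed

lemma exists_close_pair:
  fixes E :: "nat \<Rightarrow> 'a::finite" and X :: "nat \<Rightarrow> real"
  assumes X: "\<And>t. 0 \<le> X t \<and> X t \<le> 1" and "0 < \<delta>"
  obtains s s' where "s < s'" "E s = E s'" "\<bar>X s - X s'\<bar> < \<delta>"
proof -
  obtain M :: nat where M: "1 / \<delta> < M" using reals_Archimedean2 by blast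
  then have M_pos: "0 < real M" using \<open>0 < \<delta>\<close> by (smt (verit) divide_pos_pos)
  define f where "f t = (E t, \<lfloor>X t * M\<rfloor>)" for t
  have "\<lfloor>X t * M\<rfloor> \<in> {0..int M}" for t
  proof -
    have "0 \<le> X t * M" "X t * M \<le> M" using X[of t] M_pos by (auto simp: mult_le_cancel_right1)
    then show ?thesis using floor_mono[of "X t * M" "real M"] by simp
  qed
  then have "range f \<subseteq> UNIV \<times> {0..int M}" unfolding f_def by auto
  then have "finite (range f)" by (rule finite_subset) simp
  then have "\<not> inj f" using finite_imageD infinite_UNIV_nat by blast
  then obtain s s' where ss: "s \<noteq> s'" "E s = E s'" "\<lfloor>X s * M\<rfloor> = \<lfloor>X s' * M\<rfloor>"
    unfolding inj_def f_def by blast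
  then have "\<bar>X s * M - X s' * M\<bar> < 1"
    using of_int_floor_le[of "X s * M"] real_of_int_floor_add_one_gt[of "X s * M"]
      of_int_floor_le[of "X s' * M"] real_of_int_floor_add_one_gt[of "X s' * M"]
    by (simp add: abs_less_iff) linarith
  then have "\<bar>X s - X s'\<bar> < 1 / M"
    using M_pos by (simp add: less_divide_eq abs_mult flip: left_diff_distrib)
  also have "\<dots> < \<delta>" using M \<open>0 < \<delta>\<close> M_pos by (simp add: divide_less_eq mult.commute)
  finally have "\<bar>X s - X s'\<bar> < \<delta>" .
  with ss that show thesis by (cases s s' rule: linorder_cases) (auto simp: abs_minus_commute)
qed

lemma closest_pair:
  fixes E :: "nat \<Rightarrow> 'a" and X :: "nat \<Rightarrow> real"
  assumes "s < s'" "E s = E s'"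
  obtains a b where "a < b" "E a = E b" "\<bar>X a - X b\<bar> \<le> \<bar>X s - X s'\<bar>"
    "\<And>a' b'. a' < b' \<Longrightarrow> b' \<le> b \<Longrightarrow> E a' = E b' \<Longrightarrow> \<bar>X a - X b\<bar> \<le> \<bar>X a' - X b'\<bar>"
proof -
  define pairs where "pairs = {(a, b). a < b \<and> b \<le> s' \<and> E a = E b}"
  define gap where "gap = (\<lambda>(a, b). \<bar>X a - X b\<bar>)"
  have fin: "finite pairs" by (rule finite_subset[of _ "{..s'} \<times> {..s'}"]) (auto simp: pairs_def)
  have mem: "(s, s') \<in> pairs" unfolding pairs_def using assms by auto
  obtain a b where "arg_min_on gap pairs = (a, b)" by (cases "arg_min_on gap pairs")
  then have ab: "(a, b) \<in> pairs" and min: "\<not> (\<exists>q\<in>pairs. gap q < gap (a, b))"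
    using arg_min_if_finite[OF fin, of gap] mem by auto
  show thesis
  proof
    show "a < b" "E a = E b" using ab unfolding pairs_def by auto
    show "\<bar>X a - X b\<bar> \<le> \<bar>X s - X s'\<bar>" using min mem unfolding gap_def by fastforce
    fix a' b' assume "a' < b'" "b' \<le> b" "E a' = E b'"
    then have "(a', b') \<in> pairs" using ab unfolding pairs_def by auto
    then show "\<bar>X a - X b\<bar> \<le> \<bar>X a' - X b'\<bar>" using min unfolding gap_def by fastforce
  qed
qed

section \<open>The boundary of the simplex\<close>

lemma cyclic3_simps [simp]:
  fixes i :: 3
  shows "i+1 \<noteq> i" "i+2 \<noteq> i" "i+1 \<noteq> i+2" "i \<noteq> i+1" "i \<noteq> i+2" "i+2 \<noteq> i+1"
    "i+1+2 = i" "i+2+1 = i" "i+2+2 = i+1" "i+1+1 = i+2" "i+3 = i"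
  using exhaust_3[of i] by (elim disjE; simp)+

lemma cyclic3_cases: fixes i k :: 3 shows "k = i \<or> k = i+1 \<or> k = i+2"
  using exhaust_3[of i] exhaust_3[of k] by (elim disjE; simp)

lemma sum_cyclic3: fixes r :: "real^3" shows "r$i + r$(i+1) + r$(i+2) = r$1 + r$2 + r$3"
proof -
  have n: "(4::3) = 1" "(5::3) = 2" by simp_all
  from exhaust_3[of i] show ?thesis by (elim disjE) (simp_all add: n)
qed

lemma pt_component: "pt x i $ k = (if k = i+1 then 1 - x else if k = i+2 then x else 0)"
  unfolding pt_def axis_def by simp

lemma pt_components [simp]: "pt x i $ i = 0" "pt x i $ (i+1) = 1 - x" "pt x i $ (i+2) = x"
  by (simp_all add: pt_component)

lemma vec3_eq_iff: "(z::real^3) = w \<longleftrightarrow> z$i = w$i \<and> z$(i+1) = w$(i+1) \<and> z$(i+2) = w$(i+2)"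
proof
  assume "z$i = w$i \<and> z$(i+1) = w$(i+1) \<and> z$(i+2) = w$(i+2)"
  then show "z = w" unfolding vec_eq_iff
  proof (intro allI)
    fix k
    from cyclic3_cases[of i k] show "z$k = w$k" using \<open>z$i = w$i \<and> _\<close> by auto
  qed
qed simp

lemma pt_in_A0: "0 \<le> x \<Longrightarrow> x \<le> 1 \<Longrightarrow> pt x i \<in> A0"
  unfolding A0_def A0i_def using sum_cyclic3[of "pt x i" i]
  by (intro UN_I[of i] CollectI conjI allI) (auto simp: pt_component)

lemma A0_pt:
  assumes "z \<in> A0"
  obtains i x where "0 \<le> x" "x \<le> 1" "z = pt x i"
proof -
  obtain i where "z \<in> A0i i" using assms unfolding A0_def by blast
  then have z: "z$i + z$(i+1) + z$(i+2) = 1" "z$i = 0" "\<And>l. 0 \<le> z$l"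
    unfolding A0i_def using sum_cyclic3[of z i] by auto
  then have "z = pt (z$(i+2)) i" by (subst vec3_eq_iff[of _ _ i]) simp
  moreover have "0 \<le> z$(i+2)" "z$(i+2) \<le> 1" using z(1,2) z(3)[of "i+2"] z(3)[of "i+1"] by auto
  ultimately show thesis by (rule that[rotated 2])
qed

lemma pt_inj:
  assumes "0 < x" "x < 1" "pt x i = pt x' i'"
  shows "i' = i \<and> x' = x"
proof -
  have "pt x i $ (i+1) = pt x' i' $ (i+1)" "pt x i $ (i+2) = pt x' i' $ (i+2)" using assms(3) by simp_all
  then show ?thesis using cyclic3_cases[of i' i] assms(1,2) by (auto simp: pt_component)
qed

lemma pt_vertex: "pt 0 (j+2) = pt 1 (j+1)"
  unfolding pt_def by simp

lemma dist_pt: "dist (pt x i) (pt x' i) \<le> 2 * \<bar>x - x'\<bar>"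
proof -
  have "pt x i - pt x' i = (x' - x) *\<^sub>R axis (i+1) 1 + (x - x') *\<^sub>R axis (i+2) (1::real)"
    unfolding pt_def by (simp add: algebra_simps)
  then have "norm (pt x i - pt x' i)
      \<le> norm ((x' - x) *\<^sub>R axis (i+1) (1::real)) + norm ((x - x') *\<^sub>R axis (i+2) (1::real))"
    by (simp only: norm_triangle_ineq)
  also have "\<dots> = 2 * \<bar>x - x'\<bar>" by (simp add: norm_axis_1 abs_minus_commute)
  finally show ?thesis by (simp add: dist_norm)
qed

definition preimages_at :: "real^3 \<Rightarrow> real^3 \<Rightarrow> real^3 \<Rightarrow> nat \<Rightarrow> (real^3) set" where
  "preimages_at \<rho> d w t = {z. \<exists>zs. trajectory \<rho> d zs \<and> zs 0 = z \<and> zs t = w}"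

lemma preimages_eq_Union: "preimages \<rho> d w = (\<Union>t\<in>{1..}. preimages_at \<rho> d w t)"
  unfolding preimages_def preimage_def preimages_at_def by auto

lemma trajectory_shift: "trajectory \<rho> d zs \<Longrightarrow> trajectory \<rho> d (\<lambda>t. zs (t + k))"
  unfolding trajectory_def by simp

lemma preimages_at_Suc:
  assumes "z \<in> preimages_at \<rho> d w (Suc t)"
  obtains z' where "z' \<in> preimages_at \<rho> d w t" "z' \<in> phi \<rho> d z"
proof -
  obtain zs where zs: "trajectory \<rho> d zs" "zs 0 = z" "zs (Suc t) = w"
    using assms unfolding preimages_at_def by blast
  have "zs 1 \<in> preimages_at \<rho> d w t"
    unfolding preimages_at_def using trajectory_shift[OF zs(1), of 1] zs(3) by auto
  moreover have "zs 1 \<in> phi \<rho> d z" using zs(1,2) unfolding trajectory_def by (metis One_nat_def)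
  ultimately show thesis by (rule that)
qed

section \<open>The switching map in charts\<close>

text \<open>In the chart \<open>(x, i)\<close> of \<open>A\<^sub>i\<^sup>0\<close> the maps \<open>f_(i+1)\<close> and \<open>f_(i+2)\<close> act as
  \<open>x \<mapsto> (left_branch \<rho> i x, i+1)\<close> and \<open>x \<mapsto> (right_branch \<rho> i x, i+2)\<close>
  (lemmas \<open>fmap_left\<close> and \<open>fmap_right\<close>); \<open>moves_to \<rho> d i x j y\<close> says that the switching
  rule sends \<open>(x, i)\<close> to \<open>(y, j)\<close>.\<close>

definition left_branch :: "real^3 \<Rightarrow> 3 \<Rightarrow> real \<Rightarrow> real" where
  "left_branch \<rho> i x = saturation (\<rho>$i) (1 - \<rho>$(i+1)) (theta \<rho>) (1 - x)"

definition right_branch :: "real^3 \<Rightarrow> 3 \<Rightarrow> real \<Rightarrow> real" where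
  "right_branch \<rho> i x = 1 - saturation (\<rho>$i) (1 - \<rho>$(i+2)) (theta \<rho>) x"

definition moves_to :: "real^3 \<Rightarrow> real^3 \<Rightarrow> 3 \<Rightarrow> real \<Rightarrow> 3 \<Rightarrow> real \<Rightarrow> bool" where
  "moves_to \<rho> d i x j y \<longleftrightarrow>
     (j = i+1 \<and> 0 \<le> x \<and> x \<le> d$i \<and> y = left_branch \<rho> i x) \<or>
     (j = i+2 \<and> d$i \<le> x \<and> x \<le> 1 \<and> y = right_branch \<rho> i x)"

locale switching_system =
  fixes \<rho> d :: "real^3"
  assumes rho_pos: "\<And>i. 0 < \<rho>$i" and rho_lt1: "\<And>i. \<rho>$i < 1"
    and rho_sum: "\<rho>$1 + \<rho>$2 + \<rho>$3 > 1"
    and rho_pair: "\<And>i j. i \<noteq> j \<Longrightarrow> \<rho>$i + \<rho>$j \<le> 1"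
    and d_pos: "\<And>i. 0 < d$i" and d_lt1: "\<And>i. d$i < 1"
begin

abbreviation "\<theta> \<equiv> theta \<rho>"
abbreviation "step \<equiv> moves_to \<rho> d"
abbreviation "vertex_value j \<equiv> left_branch \<rho> (j+2) 0"

lemma theta_pos: "0 < \<theta>"
  using rho_sum by (simp add: theta_def)

lemma theta_cyclic: "\<theta> = \<rho>$i + \<rho>$(i+1) + \<rho>$(i+2) - 1"
  using sum_cyclic3[of \<rho> i] by (simp add: theta_def)

lemma complement_pos: "0 < 1 - \<rho>$j"
  using rho_lt1[of j] by simp

lemma rho_le_complement: "i \<noteq> j \<Longrightarrow> \<rho>$i \<le> 1 - \<rho>$j"
  using rho_pair[of i j] by simp

lemma left_branch_strict_antimono: "x < x' \<Longrightarrow> x' \<le> 1 \<Longrightarrow> left_branch \<rho> i x' < left_branch \<rho> i x"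
  unfolding left_branch_def
  by (intro saturation_strict_mono rho_pos complement_pos less_imp_le[OF theta_pos]) auto

lemma right_branch_strict_antimono: "0 \<le> x \<Longrightarrow> x < x' \<Longrightarrow> right_branch \<rho> i x' < right_branch \<rho> i x"
  unfolding right_branch_def
  using saturation_strict_mono[OF rho_pos complement_pos less_imp_le[OF theta_pos]] by simp

lemma left_branch_antimono: "x \<le> x' \<Longrightarrow> x' \<le> 1 \<Longrightarrow> left_branch \<rho> i x' \<le> left_branch \<rho> i x"
  using left_branch_strict_antimono by (cases "x = x'") (auto intro: less_imp_le)

lemma right_branch_antimono: "0 \<le> x \<Longrightarrow> x \<le> x' \<Longrightarrow> right_branch \<rho> i x' \<le> right_branch \<rho> i x"
  using right_branch_strict_antimono by (cases "x = x'") (auto intro: less_imp_le)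

lemma left_branch_bounds: "0 \<le> x \<Longrightarrow> x < 1 \<Longrightarrow> 0 < left_branch \<rho> i x \<and> left_branch \<rho> i x < 1"
  unfolding left_branch_def
  using saturation_pos[OF rho_pos complement_pos less_imp_le[OF theta_pos]]
    saturation_less_one[OF rho_pos rho_le_complement theta_pos]
  by simp

lemma right_branch_bounds: "0 < x \<Longrightarrow> x \<le> 1 \<Longrightarrow> 0 < right_branch \<rho> i x \<and> right_branch \<rho> i x < 1"
  unfolding right_branch_def
  using saturation_pos[OF rho_pos complement_pos less_imp_le[OF theta_pos]]
    saturation_less_one[OF rho_pos rho_le_complement theta_pos]
  by simp

lemma left_branch_contraction:
  "x < 1 \<Longrightarrow> x' < 1 \<Longrightarrow> x \<noteq> x' \<Longrightarrow> \<bar>left_branch \<rho> i x - left_branch \<rho> i x'\<bar> < \<bar>x - x'\<bar>"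
  unfolding left_branch_def
  using saturation_contraction[OF rho_pos rho_le_complement theta_pos, of i "i+1" "1 - x" "1 - x'"]
  by (simp add: abs_minus_commute)

lemma right_branch_contraction:
  "0 < x \<Longrightarrow> 0 < x' \<Longrightarrow> x \<noteq> x' \<Longrightarrow> \<bar>right_branch \<rho> i x - right_branch \<rho> i x'\<bar> < \<bar>x - x'\<bar>"
  unfolding right_branch_def
  using saturation_contraction[OF rho_pos rho_le_complement theta_pos, of i "i+2" x x']
  by (simp add: abs_minus_commute)

text \<open>The two charts \<open>(0, j+2)\<close> and \<open>(1, j+1)\<close> of the vertex \<open>e\<^sub>j\<close> are sent to the same point
  \<open>(vertex_value j, j)\<close>.\<close>

lemma branches_agree_at_vertex: "left_branch \<rho> (j+2) 0 = right_branch \<rho> (j+1) 1"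
proof -
  have D: "0 < 1 - \<rho>$j + \<theta>" using complement_pos[of j] theta_pos by simp
  have "\<rho>$(j+2) = 1 - \<rho>$j + \<theta> - \<rho>$(j+1)" using theta_cyclic[of j] by simp
  then show ?thesis unfolding left_branch_def right_branch_def saturation_def
    using D by (simp add: field_simps)
qed

lemma isCont_left_branch: "x \<le> 1 \<Longrightarrow> isCont (left_branch \<rho> i) x"
proof -
  assume "x \<le> 1"
  then have "1 - \<rho>$(i+1) + \<theta> * (1 - x) \<noteq> 0"
    using complement_pos[of "i+1"] theta_pos by (smt (verit) mult_nonneg_nonneg)
  then show ?thesis unfolding left_branch_def[abs_def]
    by (intro continuous_intros isCont_o2[OF _ isCont_saturation]) auto
qed

lemma isCont_right_branch: "0 \<le> x \<Longrightarrow> isCont (right_branch \<rho> i) x"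
proof -
  assume "0 \<le> x"
  then have "1 - \<rho>$(i+2) + \<theta> * x \<noteq> 0"
    using complement_pos[of "i+2"] theta_pos by (smt (verit) mult_nonneg_nonneg)
  then show ?thesis unfolding right_branch_def[abs_def]
    by (intro continuous_intros isCont_saturation)
qed

lemma step_pair_cases:
  "step i x j y \<Longrightarrow> step i x' j y' \<Longrightarrow>
   (j = i+1 \<and> 0 \<le> x \<and> x \<le> d$i \<and> 0 \<le> x' \<and> x' \<le> d$i \<and>
      y = left_branch \<rho> i x \<and> y' = left_branch \<rho> i x') \<or>
   (j = i+2 \<and> d$i \<le> x \<and> x \<le> 1 \<and> d$i \<le> x' \<and> x' \<le> 1 \<and>
      y = right_branch \<rho> i x \<and> y' = right_branch \<rho> i x')"
  unfolding moves_to_def by auto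

lemma step_domain: "step i x j y \<Longrightarrow> 0 \<le> x \<and> x \<le> 1"
  unfolding moves_to_def using d_lt1[of i] d_pos[of i] by auto

lemma step_bounds: "step i x j y \<Longrightarrow> 0 < y \<and> y < 1"
  unfolding moves_to_def using d_lt1[of i] d_pos[of i] left_branch_bounds right_branch_bounds
  by auto

lemma step_below_decision: "step i x j y \<Longrightarrow> x < d$i \<Longrightarrow> j = i+1"
  unfolding moves_to_def by auto

lemma step_above_decision: "step i x j y \<Longrightarrow> d$i < x \<Longrightarrow> j = i+2"
  unfolding moves_to_def by auto

lemma step_deterministic: "step i x j y \<Longrightarrow> step i x j' y' \<Longrightarrow> x \<noteq> d$i \<Longrightarrow> j = j' \<and> y = y'"
  unfolding moves_to_def by auto

lemma step_from_vertex: "step (j+2) 0 j (vertex_value j)" "step (j+1) 1 j (vertex_value j)"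
  unfolding moves_to_def using d_pos[of "j+2"] d_lt1[of "j+1"] branches_agree_at_vertex[of j] by auto

lemma step_margin:
  obtains \<Lambda> where "0 < \<Lambda>" "\<And>i x j y. step i x j y \<Longrightarrow> \<Lambda> \<le> y \<and> y \<le> 1 - \<Lambda>"
proof -
  define m where "m i = min (min (left_branch \<rho> i (d$i)) (1 - left_branch \<rho> i 0))
    (min (right_branch \<rho> i 1) (1 - right_branch \<rho> i (d$i)))" for i
  have m_pos: "0 < m i" for i
    unfolding m_def using left_branch_bounds[of "d$i" i] left_branch_bounds[of 0 i]
      right_branch_bounds[of 1 i] right_branch_bounds[of "d$i" i] d_pos[of i] d_lt1[of i]
    by auto
  show thesis
  proof
    show "0 < Min (range m)" using m_pos by (subst Min_gr_iff) auto
    fix i x j y assume "step i x j y"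
    moreover have "Min (range m) \<le> m i" by (rule Min_le) auto
    moreover have "left_branch \<rho> i (d$i) \<le> left_branch \<rho> i x \<and> left_branch \<rho> i x \<le> left_branch \<rho> i 0"
      if "0 \<le> x" "x \<le> d$i"
      using that d_lt1[of i] left_branch_antimono[of x "d$i" i] left_branch_antimono[of 0 x i] by simp
    moreover have "right_branch \<rho> i 1 \<le> right_branch \<rho> i x \<and> right_branch \<rho> i x \<le> right_branch \<rho> i (d$i)"
      if "d$i \<le> x" "x \<le> 1"
      using that d_pos[of i] right_branch_antimono[of "d$i" x i] right_branch_antimono[of x 1 i] by simp
    ultimately show "Min (range m) \<le> y \<and> y \<le> 1 - Min (range m)"
      unfolding moves_to_def m_def by auto
  qed
qed

lemma step_vertex:
  assumes "step i x j y"
  shows "(i = j+2 \<and> y \<le> vertex_value j \<and> (y = vertex_value j \<longrightarrow> x = 0)) \<or>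
         (i = j+1 \<and> vertex_value j \<le> y \<and> (y = vertex_value j \<longrightarrow> x = 1))"
  using assms unfolding moves_to_def
proof (elim disjE conjE)
  assume a: "j = i+1" "0 \<le> x" "x \<le> d$i" "y = left_branch \<rho> i x"
  then have "i = j+2" by simp
  moreover have "y \<le> vertex_value j" "y = vertex_value j \<longrightarrow> x = 0"
    using a calculation left_branch_strict_antimono[of 0 x i] d_lt1[of i] by force+
  ultimately show ?thesis by auto
next
  assume a: "j = i+2" "d$i \<le> x" "x \<le> 1" "y = right_branch \<rho> i x"
  then have "i = j+1" by simp
  moreover have "vertex_value j = right_branch \<rho> i 1"
    using branches_agree_at_vertex calculation by simp
  moreover have "vertex_value j \<le> y" "y = vertex_value j \<longrightarrow> x = 1"
    using a calculation right_branch_strict_antimono[of x 1 i] d_pos[of i] by force+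
  ultimately show ?thesis by auto
qed

lemma step_backward_unique:
  assumes "step i x j y" "step i' x' j y"
  shows "(i = i' \<and> x = x') \<or> (i = j+2 \<and> x = 0 \<and> i' = j+1 \<and> x' = 1) \<or>
         (i = j+1 \<and> x = 1 \<and> i' = j+2 \<and> x' = 0)"
proof (cases "i = i'")
  case True
  have "x = x'"
    using step_pair_cases[OF assms(1) assms(2)[folded True]]
  proof (elim disjE conjE)
    assume "x \<le> d$i" "x' \<le> d$i" "y = left_branch \<rho> i x" "y = left_branch \<rho> i x'"
    then show "x = x'" using left_branch_strict_antimono[of x x' i] left_branch_strict_antimono[of x' x i] d_lt1[of i]
      by (cases x x' rule: linorder_cases) auto
  next
    assume "d$i \<le> x" "d$i \<le> x'" "y = right_branch \<rho> i x" "y = right_branch \<rho> i x'"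
    then show "x = x'" using right_branch_strict_antimono[of x x' i] right_branch_strict_antimono[of x' x i] d_pos[of i]
      by (cases x x' rule: linorder_cases) auto
  qed
  with True show ?thesis by simp
next
  case False
  with step_vertex[OF assms(1)] step_vertex[OF assms(2)] show ?thesis by auto
qed

lemma step_backward_unique_interior:
  "step i x j y \<Longrightarrow> step i' x' j y \<Longrightarrow> 0 < x \<Longrightarrow> x < 1 \<Longrightarrow> i = i' \<and> x = x'"
  using step_backward_unique by fastforce

lemma backward_orbit_succ_eq:
  assumes orbit: "\<And>k. step (e (Suc k)) (p (Suc k)) (e k) (p k)" and "(e k, p k) = (e l, p l)"
  shows "(e (Suc k), p (Suc k)) = (e (Suc l), p (Suc l))"
proof -
  have "step (e (Suc l)) (p (Suc l)) (e k) (p k)" using orbit[of l] assms(2) by simp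
  then show ?thesis
    using step_backward_unique_interior[OF orbit[of k]] step_bounds[OF orbit[of "Suc k"]] by simp
qed

lemma step_contraction:
  assumes "step i x j y" "step i x' j y'" "x \<noteq> x'"
  shows "\<bar>y - y'\<bar> < \<bar>x - x'\<bar>"
  using step_pair_cases[OF assms(1,2)] d_lt1[of i] d_pos[of i] assms(3)
    left_branch_contraction[of x x' i] right_branch_contraction[of x x' i]
  by auto

lemma step_nonexpanding:
  assumes "step i x j y" "step i x' j y'"
  shows "\<bar>y - y'\<bar> \<le> \<bar>x - x'\<bar>"
proof (cases "x = x'")
  case True
  then show ?thesis using step_pair_cases[OF assms] by auto
next
  case False
  then show ?thesis using step_contraction[OF assms False] by simp
qed

lemma step_antimono: "step i x j y \<Longrightarrow> step i x' j y' \<Longrightarrow> x \<le> x' \<Longrightarrow> y' \<le> y"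
  using step_pair_cases d_lt1[of i] d_pos[of i] left_branch_antimono[of x x' i] right_branch_antimono[of x x' i]
  by fastforce

lemma step_closed_segment:
  assumes a: "step i a j ya" and b: "step i b j yb" and z: "z \<in> closed_segment a b"
  obtains yz where "step i z j yz" "yz \<in> closed_segment ya yb"
proof -
  have z_ivl: "min a b \<le> z" "z \<le> max a b" using z by (auto simp: closed_segment_eq_real_ivl split: if_splits)
  have "\<exists>yz. step i z j yz"
    using step_pair_cases[OF a b] z_ivl unfolding moves_to_def
    by (elim disjE conjE) (auto simp: min_le_iff_disj le_max_iff_disj)
  then obtain yz where yz: "step i z j yz" ..
  have "yz \<in> closed_segment ya yb"
    using step_antimono[OF a yz] step_antimono[OF yz a] step_antimono[OF b yz] step_antimono[OF yz b]
      step_antimono[OF a b] step_antimono[OF b a] z_ivl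
    by (cases "a \<le> b") (auto simp: closed_segment_eq_real_ivl)
  with yz show thesis by (rule that)
qed

lemma step_inverse_lipschitz:
  obtains K where "0 < K"
    "\<And>i x j y x' y'. step i x j y \<Longrightarrow> step i x' j y' \<Longrightarrow> \<bar>x - x'\<bar> \<le> K * \<bar>y - y'\<bar>"
proof -
  define \<kappa> where "\<kappa> i j = (1 - \<rho>$j + \<theta>)\<^sup>2 / (\<rho>$i * (1 - \<rho>$j))" for i j
  have \<kappa>_pos: "0 < \<kappa> i j" for i j
    unfolding \<kappa>_def using rho_pos[of i] complement_pos[of j] theta_pos by simp
  have \<kappa>_le: "\<kappa> i j \<le> (\<Sum>i\<in>UNIV. \<Sum>j\<in>UNIV. \<kappa> i j)" for i j
  proof -
    have "\<kappa> i j \<le> (\<Sum>j\<in>UNIV. \<kappa> i j)" by (rule member_le_sum) (auto intro: less_imp_le \<kappa>_pos)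
    also have "\<dots> \<le> (\<Sum>i\<in>UNIV. \<Sum>j\<in>UNIV. \<kappa> i j)"
      by (rule member_le_sum) (auto intro: sum_nonneg less_imp_le \<kappa>_pos)
    finally show ?thesis .
  qed
  show thesis
  proof
    show "0 < (\<Sum>i\<in>UNIV. \<Sum>j\<in>UNIV. \<kappa> i j)" using \<kappa>_le[of 1 1] \<kappa>_pos[of 1 1] by linarith
    fix i x j y x' y'
    assume "step i x j y" "step i x' j y'"
    then have "\<bar>x - x'\<bar> \<le> \<kappa> i j * \<bar>y - y'\<bar>"
      using step_pair_cases[of i x j y x' y'] d_lt1[of i] d_pos[of i]
        saturation_inverse_lipschitz[of "\<rho>$i" "1 - \<rho>$j" \<theta> "1 - x" "1 - x'"]
        saturation_inverse_lipschitz[of "\<rho>$i" "1 - \<rho>$j" \<theta> x x']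
        rho_pos[of i] complement_pos[of j] theta_pos
      unfolding \<kappa>_def left_branch_def right_branch_def by (auto simp: abs_minus_commute)
    also have "\<dots> \<le> (\<Sum>i\<in>UNIV. \<Sum>j\<in>UNIV. \<kappa> i j) * \<bar>y - y'\<bar>" by (intro mult_right_mono \<kappa>_le) simp
    finally show "\<bar>x - x'\<bar> \<le> (\<Sum>i\<in>UNIV. \<Sum>j\<in>UNIV. \<kappa> i j) * \<bar>y - y'\<bar>" .
  qed
qed

lemma closed_step_graph: "closed {(x, y). step i x j y}"
proof -
  have "continuous_on {0..d$i} (left_branch \<rho> i)" "continuous_on {d$i..1} (right_branch \<rho> i)"
    using d_lt1[of i] d_pos[of i] isCont_left_branch isCont_right_branch
    by (auto intro!: continuous_at_imp_continuous_on)
  then have "closed ((\<lambda>x. (x, left_branch \<rho> i x)) ` {0..d$i})"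
    "closed ((\<lambda>x. (x, right_branch \<rho> i x)) ` {d$i..1})"
    by (auto intro: continuous_closed_graph)
  moreover have "{(x, y). step i x j y} =
      (if j = i+1 then (\<lambda>x. (x, left_branch \<rho> i x)) ` {0..d$i}
       else if j = i+2 then (\<lambda>x. (x, right_branch \<rho> i x)) ` {d$i..1} else {})"
    unfolding moves_to_def by auto
  ultimately show ?thesis by simp
qed

lemma step_limit:
  assumes "\<forall>\<^sub>F n in sequentially. step i (xs n) j (ys n)" "xs \<longlonglongrightarrow> a" "ys \<longlonglongrightarrow> b"
  shows "step i a j b"
  using Lim_in_closed_set[OF closed_step_graph _ _ tendsto_Pair[OF assms(2,3)]] assms(1) by simp

lemma step_limit_preimage:
  assumes ev: "\<forall>\<^sub>F n in sequentially. step i (xs n) j (ys n)" and ys: "ys \<longlonglongrightarrow> p"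
  obtains a where "xs \<longlonglongrightarrow> a" "step i a j p"
proof -
  obtain K where K: "0 < K"
    "\<And>i x j y x' y'. step i x j y \<Longrightarrow> step i x' j y' \<Longrightarrow> \<bar>x - x'\<bar> \<le> K * \<bar>y - y'\<bar>"
    using step_inverse_lipschitz by blast
  obtain N where N: "\<And>n. N \<le> n \<Longrightarrow> step i (xs n) j (ys n)"
    using ev unfolding eventually_sequentially by blast
  have "Cauchy xs"
  proof (rule metric_CauchyI)
    fix e :: real assume "0 < e"
    then obtain M where M: "\<And>m n. M \<le> m \<Longrightarrow> M \<le> n \<Longrightarrow> dist (ys m) (ys n) < e / K"
      using ys[THEN LIMSEQ_imp_Cauchy] K(1) unfolding Cauchy_def by (metis divide_pos_pos)
    show "\<exists>M. \<forall>m\<ge>M. \<forall>n\<ge>M. dist (xs m) (xs n) < e"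
    proof (intro exI allI impI)
      fix m n assume "max M N \<le> m" "max M N \<le> n"
      then have "\<bar>xs m - xs n\<bar> \<le> K * \<bar>ys m - ys n\<bar>" "\<bar>ys m - ys n\<bar> < e / K"
        using K(2)[OF N N] M[of m n] by (auto simp: dist_real_def)
      then show "dist (xs m) (xs n) < e"
        using K(1) by (simp add: dist_real_def pos_less_divide_eq mult.commute)
    qed
  qed
  then obtain a where "xs \<longlonglongrightarrow> a" by (auto simp: Cauchy_convergent_iff convergent_def)
  then show thesis using step_limit[OF ev _ ys] that by blast
qed

text \<open>Otherwise the inverse Lipschitz bound would put \<open>x\<close> close to a vertex, but images keep a
  margin from the vertices.\<close>

lemma image_avoids_vertex_value:
  obtains \<delta> where "0 < \<delta>" "\<And>i' x' i x j y. step i' x' i x \<Longrightarrow> step i x j y \<Longrightarrow> \<delta> \<le> \<bar>y - vertex_value j\<bar>"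
proof -
  obtain \<Lambda> where \<Lambda>: "0 < \<Lambda>" "\<And>i x j y. step i x j y \<Longrightarrow> \<Lambda> \<le> y \<and> y \<le> 1 - \<Lambda>"
    using step_margin by blast
  obtain K where K: "0 < K"
    "\<And>i x j y x' y'. step i x j y \<Longrightarrow> step i x' j y' \<Longrightarrow> \<bar>x - x'\<bar> \<le> K * \<bar>y - y'\<bar>"
    using step_inverse_lipschitz by blast
  show thesis
  proof
    show "0 < \<Lambda> / K" using \<Lambda>(1) K(1) by simp
    fix i' x' i x j y assume "step i' x' i x" and s: "step i x j y"
    then have x: "\<Lambda> \<le> x" "x \<le> 1 - \<Lambda>" using \<Lambda>(2) by auto
    have "\<bar>x - 0\<bar> \<le> K * \<bar>y - vertex_value j\<bar> \<or> \<bar>x - 1\<bar> \<le> K * \<bar>y - vertex_value j\<bar>"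
      using step_vertex[OF s] step_from_vertex[of j] s
        K(2)[of i x j y 0 "vertex_value j"] K(2)[of i x j y 1 "vertex_value j"] by auto
    then have "\<Lambda> \<le> K * \<bar>y - vertex_value j\<bar>" using x by auto
    then show "\<Lambda> / K \<le> \<bar>y - vertex_value j\<bar>" using K(1) by (simp add: divide_le_eq mult.commute)
  qed
qed

lemma images_converge:
  assumes ev: "\<forall>\<^sub>F n in sequentially. step (es n) (xs n) e (ys n)" and ys: "ys \<longlonglongrightarrow> p"
    and images: "\<And>n. \<exists>i x. step i x (es n) (xs n)"
  obtains e' a where "\<forall>\<^sub>F n in sequentially. es n = e'" "xs \<longlonglongrightarrow> a" "step e' a e p"
proof -
  obtain \<delta> where \<delta>: "0 < \<delta>" "\<And>i' x' i x j y. step i' x' i x \<Longrightarrow> step i x j y \<Longrightarrow> \<delta> \<le> \<bar>y - vertex_value j\<bar>"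
    using image_avoids_vertex_value by blast
  have "p \<noteq> vertex_value e"
  proof
    assume "p = vertex_value e"
    then have "\<forall>\<^sub>F n in sequentially. \<bar>ys n - vertex_value e\<bar> < \<delta>"
      using tendstoD[OF ys \<delta>(1)] by (simp add: dist_real_def)
    with ev have "\<forall>\<^sub>F n in sequentially. False"
    proof eventually_elim
      case (elim n)
      then show False using images[of n] \<delta>(2) by (meson not_le)
    qed
    then show False by simp
  qed
  then consider "p < vertex_value e" | "vertex_value e < p" by linarith
  then obtain e' where "\<forall>\<^sub>F n in sequentially. es n = e'"
  proof cases
    case 1
    then have "\<forall>\<^sub>F n in sequentially. ys n < vertex_value e" by (rule order_tendstoD(2)[OF ys])
    with ev have "\<forall>\<^sub>F n in sequentially. es n = e+2"
      by eventually_elim (use step_vertex in fastforce)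
    then show thesis by (rule that)
  next
    case 2
    then have "\<forall>\<^sub>F n in sequentially. vertex_value e < ys n" by (rule order_tendstoD(1)[OF ys])
    with ev have "\<forall>\<^sub>F n in sequentially. es n = e+1"
      by eventually_elim (use step_vertex in fastforce)
    then show thesis by (rule that)
  qed
  moreover from this ev have "\<forall>\<^sub>F n in sequentially. step e' (xs n) e (ys n)"
    by eventually_elim simp
  then obtain a where "xs \<longlonglongrightarrow> a" "step e' a e p" using ys by (rule step_limit_preimage)
  ultimately show thesis by (rule that)
qed

text \<open>Each step reverses the sign of the difference without increasing it.\<close>

lemma same_itinerary_even_segment:
  assumes x: "\<And>m. m < n \<Longrightarrow> step (e m) (x m) (e (Suc m)) (x (Suc m))"
    and y: "\<And>m. m < n \<Longrightarrow> step (e m) (y m) (e (Suc m)) (y (Suc m))" and "even n"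
  shows "y n - x n \<in> closed_segment 0 (y 0 - x 0)"
  using step_antimono[OF x y] step_antimono[OF y x] step_nonexpanding[OF y x] \<open>even n\<close>
  by (intro alternating_nonexpanding_even[where D = "\<lambda>m. y m - x m", simplified])
    (auto simp: abs_minus_commute)

lemma fmap_component:
  "fmap \<rho> j z $ l = (if l = j then 0 else ((1 - \<rho>$j) * z$l + \<rho>$l * z$j) / ((1 - \<rho>$j) + \<theta> * z$j))"
  unfolding fmap_def by simp

lemma fmap_left: "x \<le> 1 \<Longrightarrow> fmap \<rho> (i+1) (pt x i) = pt (left_branch \<rho> i x) (i+1)"
proof -
  assume "x \<le> 1"
  then have D: "0 < 1 - \<rho>$(i+1) + \<theta> * (1 - x)"
    using complement_pos[of "i+1"] theta_pos by (simp add: add_pos_nonneg)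
  have "fmap \<rho> (i+1) (pt x i) $ i = left_branch \<rho> i x"
    unfolding fmap_component left_branch_def saturation_def by simp
  moreover have "fmap \<rho> (i+1) (pt x i) $ (i+2) = 1 - left_branch \<rho> i x"
  proof -
    have "fmap \<rho> (i+1) (pt x i) $ (i+2) = ((1 - \<rho>$(i+1)) * x + \<rho>$(i+2) * (1 - x)) / (1 - \<rho>$(i+1) + \<theta> * (1 - x))"
      unfolding fmap_component by simp
    also have "\<dots> = 1 - \<rho>$i * (1 - x) / (1 - \<rho>$(i+1) + \<theta> * (1 - x))"
      using D by (simp add: field_simps theta_cyclic[of i])
    finally show ?thesis unfolding left_branch_def saturation_def by simp
  qed
  moreover have "fmap \<rho> (i+1) (pt x i) $ (i+1) = 0" unfolding fmap_component by simp
  ultimately show ?thesis by (subst vec3_eq_iff[of _ _ i]) (simp add: pt_component)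
qed

lemma fmap_right: "0 \<le> x \<Longrightarrow> fmap \<rho> (i+2) (pt x i) = pt (right_branch \<rho> i x) (i+2)"
proof -
  assume "0 \<le> x"
  then have D: "0 < 1 - \<rho>$(i+2) + \<theta> * x"
    using complement_pos[of "i+2"] theta_pos by (simp add: add_pos_nonneg)
  have "fmap \<rho> (i+2) (pt x i) $ i = 1 - right_branch \<rho> i x"
    unfolding fmap_component right_branch_def saturation_def by simp
  moreover have "fmap \<rho> (i+2) (pt x i) $ (i+1) = right_branch \<rho> i x"
  proof -
    have "fmap \<rho> (i+2) (pt x i) $ (i+1) = ((1 - \<rho>$(i+2)) * (1 - x) + \<rho>$(i+1) * x) / (1 - \<rho>$(i+2) + \<theta> * x)"
      unfolding fmap_component by simp
    also have "\<dots> = 1 - \<rho>$i * x / (1 - \<rho>$(i+2) + \<theta> * x)"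
      using D by (simp add: field_simps theta_cyclic[of i])
    finally show ?thesis unfolding right_branch_def saturation_def by simp
  qed
  moreover have "fmap \<rho> (i+2) (pt x i) $ (i+2) = 0" unfolding fmap_component by simp
  ultimately show ?thesis by (subst vec3_eq_iff[of _ _ i]) (simp add: pt_component)
qed

lemma phi_step: "step i x j y \<Longrightarrow> pt y j \<in> phi \<rho> d (pt x i)"
proof -
  assume s: "step i x j y"
  have "0 \<le> x" "x \<le> 1" using step_domain[OF s] by auto
  then have "pt x i \<in> A0" by (rule pt_in_A0)
  moreover have "j \<in> switch d (pt x i)" "pt x i \<notin> A0i j" "pt y j = fmap \<rho> j (pt x i)"
    using s \<open>0 \<le> x\<close> \<open>x \<le> 1\<close> d_pos[of i] d_lt1[of i] fmap_left fmap_right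
    unfolding moves_to_def switch_def A0i_def by (auto simp: pt_component)
  ultimately show ?thesis unfolding phi_def by (simp only: if_True) blast
qed

lemma phi_imp_step:
  assumes "w \<in> phi \<rho> d z"
  obtains i x j y where "z = pt x i" "w = pt y j" "step i x j y"
proof -
  obtain j where j: "j \<in> switch d z" "w = fmap \<rho> j z"
    using assms unfolding phi_def by (auto split: if_splits)
  then obtain x i where x: "0 \<le> x" "x \<le> 1" "z = pt x i"
    and branch: "(x \<le> d$i \<and> j = i+1) \<or> (d$i \<le> x \<and> j = i+2)"
    unfolding switch_def by blast
  from branch have "step i x j (if j = i+1 then left_branch \<rho> i x else right_branch \<rho> i x)"
    using x unfolding moves_to_def by auto
  moreover have "w = pt (if j = i+1 then left_branch \<rho> i x else right_branch \<rho> i x) j"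
    using branch j(2) x fmap_left fmap_right by auto
  ultimately show thesis using x(3) that by blast
qed

lemma phi_nonempty: "z \<in> A0 \<Longrightarrow> \<exists>w. w \<in> phi \<rho> d z"
proof -
  assume "z \<in> A0"
  then obtain i x where x: "0 \<le> x" "x \<le> 1" "z = pt x i" by (rule A0_pt)
  then have "step i x (i+1) (left_branch \<rho> i x) \<or> step i x (i+2) (right_branch \<rho> i x)"
    unfolding moves_to_def by auto
  then show ?thesis using phi_step x(3) by blast
qed

lemma phi_in_A0: "w \<in> phi \<rho> d z \<Longrightarrow> w \<in> A0"
  by (metis phi_imp_step step_bounds pt_in_A0 less_imp_le)

lemma phi_backward_unique: "w \<in> phi \<rho> d z \<Longrightarrow> w \<in> phi \<rho> d z' \<Longrightarrow> z = z'"
proof -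
  assume "w \<in> phi \<rho> d z" "w \<in> phi \<rho> d z'"
  then obtain i x j y i' x' j' y' where z: "z = pt x i" "w = pt y j" "step i x j y"
    and z': "z' = pt x' i'" "w = pt y' j'" "step i' x' j' y'"
    by (metis phi_imp_step)
  have "j' = j \<and> y' = y" using pt_inj step_bounds[OF z(3)] z(2) z'(2) by metis
  then have "step i' x' j y" using z'(3) by simp
  from step_backward_unique[OF z(3) this] show "z = z'" using z(1) z'(1) pt_vertex by auto
qed

lemma trajectory_exists:
  assumes "z \<in> A0"
  obtains zs where "trajectory \<rho> d zs" "zs 0 = z"
proof -
  define next_pt where "next_pt w = (SOME w'. w' \<in> phi \<rho> d w)" for w
  have next_pt: "w \<in> A0 \<Longrightarrow> next_pt w \<in> phi \<rho> d w" for w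
    unfolding next_pt_def using phi_nonempty by (rule someI_ex)
  have in_A0: "(next_pt ^^ t) z \<in> A0" for t
    by (induction t) (use assms next_pt phi_in_A0 in auto)
  have "trajectory \<rho> d (\<lambda>t. (next_pt ^^ t) z)"
    unfolding trajectory_def using next_pt[OF in_A0] by simp
  then show thesis by (rule that) simp
qed

lemma preimages_at_unique:
  "z \<in> preimages_at \<rho> d w t \<Longrightarrow> z' \<in> preimages_at \<rho> d w t \<Longrightarrow> z = z'"
proof (induction t arbitrary: z z')
  case 0
  then show ?case unfolding preimages_at_def by auto
next
  case (Suc t)
  obtain y where "y \<in> preimages_at \<rho> d w t" "y \<in> phi \<rho> d z"
    using Suc.prems(1) by (rule preimages_at_Suc)
  moreover obtain y' where "y' \<in> preimages_at \<rho> d w t" "y' \<in> phi \<rho> d z'"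
    using Suc.prems(2) by (rule preimages_at_Suc)
  ultimately show ?case using Suc.IH phi_backward_unique by metis
qed

lemma finite_preimages_at: "finite (preimages_at \<rho> d w t)"
proof -
  have "preimages_at \<rho> d w t = {} \<or> (\<exists>z. preimages_at \<rho> d w t = {z})"
    using preimages_at_unique by blast
  then show ?thesis by auto
qed

lemma preimages_at_nonempty:
  assumes "infinite (preimages \<rho> d w)"
  shows "preimages_at \<rho> d w t \<noteq> {}"
proof
  assume empty: "preimages_at \<rho> d w t = {}"
  have later: "preimages_at \<rho> d w (t + m) = {}" for m
  proof (induction m)
    case (Suc m)
    then show ?case using preimages_at_Suc[of _ \<rho> d w "t + m"] by auto
  qed (use empty in simp)
  have "preimages \<rho> d w \<subseteq> (\<Union>s<t. preimages_at \<rho> d w s)"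
  proof
    fix z assume "z \<in> preimages \<rho> d w"
    then obtain s where s: "z \<in> preimages_at \<rho> d w s" unfolding preimages_eq_Union by blast
    then have "s < t" using later[of "s - t"] by (cases "s < t") auto
    with s show "z \<in> (\<Union>s<t. preimages_at \<rho> d w s)" by blast
  qed
  then show False using assms finite_preimages_at by (meson finite_UN_I finite_lessThan finite_subset)
qed

text \<open>By backward uniqueness of \<open>\<phi>\<close> there is at most one pre-image at each depth.\<close>

lemma backward_chain:
  assumes inf: "infinite (preimages \<rho> d w)"
  obtains u where "u 0 = w" "\<And>t. u t \<in> phi \<rho> d (u (Suc t))" "inj u"
    "range u = insert w (preimages \<rho> d w)"
proof -
  define u where "u t = (SOME z. z \<in> preimages_at \<rho> d w t)" for t
  have u_in: "u t \<in> preimages_at \<rho> d w t" for t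
    unfolding u_def using preimages_at_nonempty[OF inf, of t] by (simp add: some_in_eq)
  have u_eq: "z \<in> preimages_at \<rho> d w t \<Longrightarrow> z = u t" for z t
    using preimages_at_unique u_in by blast
  have u0: "u 0 = w" using u_in[of 0] unfolding preimages_at_def by auto
  have u_step: "u t \<in> phi \<rho> d (u (Suc t))" for t
    using preimages_at_Suc[OF u_in[of "Suc t"]] u_eq by metis
  have u_range: "range u = insert w (preimages \<rho> d w)"
  proof -
    have "preimages \<rho> d w = u ` {1..}"
      unfolding preimages_eq_Union using u_in u_eq by blast
    moreover have "range u = insert (u 0) (u ` {1..})"
      by (metis UNIV_nat_eq atLeast_Suc_greaterThan image_insert greaterThan_0 One_nat_def)
    ultimately show ?thesis using u0 by simp
  qed
  have "inj u"
  proof (rule ccontr)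
    assume "\<not> inj u"
    then obtain a b where "u a = u b" "a < b" unfolding inj_def by (metis linorder_neqE_nat)
    then have "finite (range u)"
      using finite_range_if_repeats[of u] u_step phi_backward_unique by metis
    then show False using inf u_range by simp
  qed
  with u0 u_step u_range show thesis using that by blast
qed

lemma chain_preimage:
  assumes chain: "\<And>m. m < k \<Longrightarrow> c (Suc m) \<in> phi \<rho> d (c m)" and "c k \<in> A0" "1 \<le> k"
  shows "c 0 \<in> preimages \<rho> d (c k)"
proof -
  obtain T where T: "trajectory \<rho> d T" "T 0 = c k" using trajectory_exists[OF assms(2)] .
  define zs where "zs n = (if n \<le> k then c n else T (n - k))" for n
  have "zs (Suc n) \<in> phi \<rho> d (zs n)" for n
  proof (cases "n < k")
    case True
    then show ?thesis using chain[OF True] unfolding zs_def by simp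
  next
    case False
    then have "zs n = T (n - k)" "zs (Suc n) = T (Suc (n - k))"
      unfolding zs_def using T(2) by (auto simp: Suc_diff_le)
    then show ?thesis using T(1) unfolding trajectory_def by simp
  qed
  then have "trajectory \<rho> d zs" unfolding trajectory_def by blast
  then show ?thesis
    unfolding preimages_def preimage_def using assms(3) by (intro CollectI exI[of _ zs]) (auto simp: zs_def)
qed

lemma finite_backward_orbit:
  assumes fin: "finite (preimages \<rho> d (pt (d$i) i))" and start: "e 0 = i" "p 0 = d$i"
    and orbit: "\<And>k. step (e (Suc k)) (p (Suc k)) (e k) (p k)"
  shows "finite (range (\<lambda>k. (e k, p k)))"
proof -
  define pt_of where "pt_of = (\<lambda>(j, y). pt y j)"
  have "pt (p k) (e k) \<in> preimages \<rho> d (pt (d$i) i)" if "1 \<le> k" for k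
  proof -
    have "pt (p (k - Suc m)) (e (k - Suc m)) \<in> phi \<rho> d (pt (p (k - m)) (e (k - m)))" if "m < k" for m
      using phi_step orbit[of "k - Suc m"] that by (simp add: Suc_diff_Suc)
    moreover have "pt (d$i) i \<in> A0" using d_pos[of i] d_lt1[of i] by (intro pt_in_A0) auto
    ultimately show ?thesis
      using chain_preimage[of k "\<lambda>m. pt (p (k - m)) (e (k - m))"] start \<open>1 \<le> k\<close> by simp
  qed
  then have "pt_of ` (\<lambda>k. (e k, p k)) ` {1..} \<subseteq> preimages \<rho> d (pt (d$i) i)"
    unfolding pt_of_def by auto
  then have "finite (pt_of ` (\<lambda>k. (e k, p k)) ` {1..})" using fin by (rule finite_subset)
  moreover have "inj_on pt_of (range (\<lambda>k. (e k, p k)))"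
    unfolding pt_of_def using pt_inj step_bounds[OF orbit] by (auto intro!: inj_onI) metis+
  ultimately have "finite ((\<lambda>k. (e k, p k)) ` {1..})"
    by (meson finite_imageD inj_on_subset image_mono subset_UNIV)
  moreover have "range (\<lambda>k. (e k, p k)) = insert (e 0, p 0) ((\<lambda>k. (e k, p k)) ` {1..})"
    by (metis UNIV_nat_eq atLeast_Suc_greaterThan image_insert greaterThan_0 One_nat_def)
  ultimately show ?thesis by simp
qed

lemma orbit_coordinates:
  assumes chain: "\<And>t. u t \<in> phi \<rho> d (u (Suc t))"
  obtains E X where "\<And>t. u t = pt (X t) (E t)" "\<And>t. step (E (Suc t)) (X (Suc t)) (E t) (X t)"
proof -
  have "\<exists>j y. 0 < y \<and> y < 1 \<and> u t = pt y j" for t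
    using phi_imp_step[OF chain[of t]] step_bounds by metis
  then obtain E X where EX: "\<And>t. 0 < X t \<and> X t < 1 \<and> u t = pt (X t) (E t)" by metis
  have "step (E (Suc t)) (X (Suc t)) (E t) (X t)" for t
  proof -
    obtain i x j y where "u (Suc t) = pt x i" "u t = pt y j" "step i x j y"
      using phi_imp_step[OF chain[of t]] .
    with pt_inj EX[of t] EX[of "Suc t"] show ?thesis by metis
  qed
  with EX show thesis using that by blast
qed

end

section \<open>Backward orbits of a decision point\<close>

text \<open>The pre-images of \<open>d\<^sub>1\<close> form one backward orbit \<open>(E t, X t)\<close>, read in the charts
  \<open>(x, i)\<close>: the point at time \<open>t+1\<close> is mapped to the point at time \<open>t\<close>. The last assumption
  encodes the finiteness of the pre-images of \<open>d\<^sub>2\<close> and \<open>d\<^sub>3\<close>.\<close>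

locale backward_orbit = switching_system +
  fixes E :: "nat \<Rightarrow> 3" and X :: "nat \<Rightarrow> real"
  assumes orbit_start: "E 0 = 1" "X 0 = d$1"
    and orbit_step: "\<And>t. step (E (Suc t)) (X (Suc t)) (E t) (X t)"
    and orbit_inj: "inj (\<lambda>t. (E t, X t))"
    and finite_backward_orbits: "\<And>i e p. i \<noteq> 1 \<Longrightarrow> e 0 = i \<Longrightarrow> p 0 = d$i \<Longrightarrow>
          (\<And>k. step (e (Suc k)) (p (Suc k)) (e k) (p k)) \<Longrightarrow> finite (range (\<lambda>k. (e k, p k)))"
begin

definition accumulates :: "nat \<Rightarrow> bool" where
  "accumulates t \<longleftrightarrow> (\<forall>\<epsilon>>0. \<exists>s. s \<noteq> t \<and> E s = E t \<and> \<bar>X s - X t\<bar> < \<epsilon>)"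

lemma orbit_bounds: "0 < X t \<and> X t < 1"
  using step_bounds[OF orbit_step[of t]] .

lemma orbit_eq: "E s = E t \<Longrightarrow> X s = X t \<Longrightarrow> s = t"
  using injD[OF orbit_inj] by blast

lemma orbit_off_decision:
  assumes "1 \<le> t"
  shows "X t \<noteq> d$(E t)"
proof
  assume eq: "X t = d$(E t)"
  show False
  proof (cases "E t = 1")
    case True
    then show False using orbit_eq[of t 0] eq orbit_start assms by simp
  next
    case False
    have "finite (range (\<lambda>k. (E (t + k), X (t + k))))"
      by (rule finite_backward_orbits[OF False]) (use eq orbit_step in auto)
    moreover have "inj (\<lambda>k. (E (t + k), X (t + k)))"
    proof (rule injI)
      fix k l assume "(E (t + k), X (t + k)) = (E (t + l), X (t + l))"
      then have "t + k = t + l" using injD[OF orbit_inj] by blast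
      then show "k = l" by simp
    qed
    ultimately show False using finite_imageD infinite_UNIV_nat by blast
  qed
qed

text \<open>Near the image of a point that avoids the vertex value, the branch cannot change, so the
  inverse Lipschitz bound carries accumulation one step backwards.\<close>

lemma accumulates_Suc:
  assumes acc: "accumulates t"
  shows "accumulates (Suc t)"
proof -
  obtain K where K: "0 < K"
    "\<And>i x j y x' y'. step i x j y \<Longrightarrow> step i x' j y' \<Longrightarrow> \<bar>x - x'\<bar> \<le> K * \<bar>y - y'\<bar>"
    using step_inverse_lipschitz by blast
  have st: "step (E (Suc t)) (X (Suc t)) (E t) (X t)" by (rule orbit_step)
  define g where "g = \<bar>X t - vertex_value (E t)\<bar>"
  have "0 < g" unfolding g_def using step_vertex[OF st] orbit_bounds[of "Suc t"] by auto
  show ?thesis unfolding accumulates_def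
  proof (intro allI impI)
    fix \<epsilon> :: real assume "0 < \<epsilon>"
    then have "0 < min (\<epsilon> / K) g" using \<open>0 < g\<close> K(1) by simp
    then obtain s where s: "s \<noteq> t" "E s = E t" "\<bar>X s - X t\<bar> < min (\<epsilon> / K) g"
      using acc unfolding accumulates_def by blast
    have ss: "step (E (Suc s)) (X (Suc s)) (E t) (X s)" using orbit_step[of s] s(2) by simp
    have same: "E (Suc s) = E (Suc t)"
    proof (rule ccontr)
      assume "E (Suc s) \<noteq> E (Suc t)"
      then have "g \<le> \<bar>X s - X t\<bar>" unfolding g_def using step_vertex[OF st] step_vertex[OF ss] by auto
      then show False using s(3) by simp
    qed
    have "\<bar>X (Suc s) - X (Suc t)\<bar> \<le> K * \<bar>X s - X t\<bar>" using K(2)[OF ss[unfolded same] st] .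
    also have "\<dots> < \<epsilon>" using s(3) K(1) by (simp add: pos_less_divide_eq mult.commute)
    finally show "\<exists>s'. s' \<noteq> Suc t \<and> E s' = E (Suc t) \<and> \<bar>X s' - X (Suc t)\<bar> < \<epsilon>"
      using same s(1) by (intro exI[of _ "Suc s"]) auto
  qed
qed

text \<open>Take a closest pair of orbit points on a common side. Mapping both forward would bring them
  strictly closer unless they lie on different sides of the decision point, or one of them is the
  start \<open>d\<^sub>1\<close> itself.\<close>

lemma returns_near_decision_point:
  assumes "0 < \<delta>"
  shows "\<exists>t\<ge>1. \<bar>X t - d$(E t)\<bar> < \<delta>"
proof -
  have "0 \<le> X t \<and> X t \<le> 1" for t using orbit_bounds[of t] by simp
  then obtain s s' where "s < s'" "E s = E s'" "\<bar>X s - X s'\<bar> < \<delta>"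
    using exists_close_pair assms by blast
  then obtain a b where ab: "a < b" "E a = E b" and close: "\<bar>X a - X b\<bar> < \<delta>"
    and min: "\<And>a' b'. a' < b' \<Longrightarrow> b' \<le> b \<Longrightarrow> E a' = E b' \<Longrightarrow> \<bar>X a - X b\<bar> \<le> \<bar>X a' - X b'\<bar>"
    using closest_pair[of s s' E X] by (metis order_le_less_trans)
  show ?thesis
  proof (cases "a = 0")
    case True
    then show ?thesis using ab close orbit_start by (intro exI[of _ b]) (auto simp: abs_minus_commute)
  next
    case False
    define i where "i = E a"
    have sa: "step i (X a) (E (a - 1)) (X (a - 1))" and sb: "step i (X b) (E (b - 1)) (X (b - 1))"
      using orbit_step[of "a - 1"] orbit_step[of "b - 1"] False ab unfolding i_def by auto
    have "X a \<noteq> d$i" "X b \<noteq> d$i" using orbit_off_decision[of a] orbit_off_decision[of b] False ab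
      unfolding i_def by auto
    moreover have "\<not> ((X a < d$i \<and> X b < d$i) \<or> (d$i < X a \<and> d$i < X b))"
    proof
      assume side: "(X a < d$i \<and> X b < d$i) \<or> (d$i < X a \<and> d$i < X b)"
      then have eqE: "E (a - 1) = E (b - 1)"
        using step_below_decision[OF sa] step_below_decision[OF sb]
          step_above_decision[OF sa] step_above_decision[OF sb] by auto
      have "X a \<noteq> X b" using orbit_eq[of a b] ab by auto
      then have "\<bar>X (a - 1) - X (b - 1)\<bar> < \<bar>X a - X b\<bar>" using step_contraction[OF sa sb[folded eqE]] by simp
      moreover have "\<bar>X a - X b\<bar> \<le> \<bar>X (a - 1) - X (b - 1)\<bar>" using min[of "a - 1" "b - 1"] ab False eqE by simp
      ultimately show False by simp
    qed
    ultimately have "\<bar>X a - d$i\<bar> < \<bar>X a - X b\<bar>" by auto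
    then show ?thesis using close False unfolding i_def by (intro exI[of _ a]) auto
  qed
qed

definition converges_along :: "(nat \<Rightarrow> nat) \<Rightarrow> (nat \<Rightarrow> 3) \<Rightarrow> (nat \<Rightarrow> real) \<Rightarrow> bool" where
  "converges_along s e p \<longleftrightarrow>
     (\<forall>k. (\<forall>\<^sub>F n in sequentially. E (s n + k) = e k) \<and> (\<lambda>n. X (s n + k)) \<longlonglongrightarrow> p k)"

lemma limit_orbit_exists:
  assumes "\<And>n. E (s n) = i" "(\<lambda>n. X (s n)) \<longlonglongrightarrow> d$i"
  obtains e p where "converges_along s e p" "e 0 = i" "p 0 = d$i"
proof -
  have "\<exists>e' p'. (\<forall>\<^sub>F n in sequentially. E (s n + k) = e') \<and> (\<lambda>n. X (s n + k)) \<longlonglongrightarrow> p'" for k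
  proof (induction k)
    case 0
    show ?case using assms by auto
  next
    case (Suc k)
    then obtain e' p' where e': "\<forall>\<^sub>F n in sequentially. E (s n + k) = e'"
      and p': "(\<lambda>n. X (s n + k)) \<longlonglongrightarrow> p'" by blast
    from e' have ev: "\<forall>\<^sub>F n in sequentially. step (E (s n + Suc k)) (X (s n + Suc k)) e' (X (s n + k))"
    proof eventually_elim
      case (elim n)
      then show ?case using orbit_step[of "s n + k"] by simp
    qed
    have img: "\<exists>i x. step i x (E (s n + Suc k)) (X (s n + Suc k))" for n
      using orbit_step by blast
    obtain e'' a where "\<forall>\<^sub>F n in sequentially. E (s n + Suc k) = e''"
      "(\<lambda>n. X (s n + Suc k)) \<longlonglongrightarrow> a"
      using images_converge[OF ev p' img] by blast
    then show ?case by blast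
  qed
  then obtain e p where ep: "\<And>k. \<forall>\<^sub>F n in sequentially. E (s n + k) = e k"
    "\<And>k. (\<lambda>n. X (s n + k)) \<longlonglongrightarrow> p k" by metis
  show thesis
  proof
    show "converges_along s e p" unfolding converges_along_def using ep by blast
    show "e 0 = i" using ep(1)[of 0] assms(1) by (simp add: eventually_const_iff)
    show "p 0 = d$i" using LIMSEQ_unique[OF ep(2)[of 0]] assms(2) by simp
  qed
qed

lemma limit_orbit_step:
  assumes "converges_along s e p"
  shows "step (e (Suc k)) (p (Suc k)) (e k) (p k)"
proof -
  have "\<forall>\<^sub>F n in sequentially. E (s n + k) = e k" "\<forall>\<^sub>F n in sequentially. E (s n + Suc k) = e (Suc k)"
    using assms unfolding converges_along_def by blast+
  then have "\<forall>\<^sub>F n in sequentially. step (e (Suc k)) (X (s n + Suc k)) (e k) (X (s n + k))"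
  proof eventually_elim
    case (elim n)
    then show ?case using orbit_step[of "s n + k"] by simp
  qed
  moreover have "(\<lambda>n. X (s n + Suc k)) \<longlonglongrightarrow> p (Suc k)" "(\<lambda>n. X (s n + k)) \<longlonglongrightarrow> p k"
    using assms unfolding converges_along_def by blast+
  ultimately show ?thesis by (rule step_limit)
qed

lemma limit_orbit_visits_start:
  assumes "converges_along s e p" "\<And>n. 1 \<le> s n" "e m = 1" "p m = d$1"
  shows "accumulates 0"
  unfolding accumulates_def
proof (intro allI impI)
  fix \<epsilon> :: real assume "0 < \<epsilon>"
  have "\<forall>\<^sub>F n in sequentially. E (s n + m) = e m" "(\<lambda>n. X (s n + m)) \<longlonglongrightarrow> p m"
    using assms(1) unfolding converges_along_def by blast+
  from this(1) tendstoD[OF this(2) \<open>0 < \<epsilon>\<close>]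
  have "\<forall>\<^sub>F n in sequentially. E (s n + m) = 1 \<and> \<bar>X (s n + m) - d$1\<bar> < \<epsilon>"
    by eventually_elim (use assms(3,4) in \<open>simp add: dist_real_def\<close>)
  then obtain n where "E (s n + m) = 1" "\<bar>X (s n + m) - d$1\<bar> < \<epsilon>"
    using eventually_happens'[OF trivial_limit_sequentially] by blast
  then show "\<exists>s'. s' \<noteq> 0 \<and> E s' = E 0 \<and> \<bar>X s' - X 0\<bar> < \<epsilon>"
    using assms(2)[of n] orbit_start by (intro exI[of _ "s n + m"]) auto
qed

text \<open>Branches map segments onto segments, and off the decision points the orbit has no choice
  of branch.\<close>

lemma orbit_trapped_by_cycle:
  assumes cp: "\<And>m. m < Q \<Longrightarrow> step (ce m) (cp m) (ce (Suc m)) (cp (Suc m))"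
    and y: "\<And>m. m < Q \<Longrightarrow> step (ce m) (y m) (ce (Suc m)) (y (Suc m))"
    and closes: "0 < Q" "ce Q = ce 0" "cp Q = cp 0" "y Q \<in> closed_segment (cp 0) (y 0)"
    and "m \<le> Q" "E t = ce m" "X t \<in> closed_segment (cp m) (y m)"
  shows "\<exists>m\<le>Q. E 0 = ce m \<and> X 0 \<in> closed_segment (cp m) (y m)"
  using assms(7-9)
proof (induction t arbitrary: m)
  case 0
  then show ?case by blast
next
  case (Suc t)
  obtain m' where m': "m' < Q" "E (Suc t) = ce m'" "X (Suc t) \<in> closed_segment (cp m') (y m')"
  proof (cases "m < Q")
    case True
    then show thesis using Suc.prems that by blast
  next
    case False
    then have "m = Q" using Suc.prems by simp
    moreover have "closed_segment (cp Q) (y Q) \<subseteq> closed_segment (cp 0) (y 0)"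
      using closes by (simp add: subset_closed_segment)
    ultimately show thesis using that[of 0] Suc.prems closes by auto
  qed
  obtain yz where yz: "step (ce m') (X (Suc t)) (ce (Suc m')) yz"
    "yz \<in> closed_segment (cp (Suc m')) (y (Suc m'))"
    using step_closed_segment[OF cp[OF m'(1)] y[OF m'(1)] m'(3)] by blast
  have "E t = ce (Suc m') \<and> X t = yz"
    using step_deterministic[OF orbit_step[of t, unfolded m'(2)] yz(1)]
      orbit_off_decision[of "Suc t"] m'(2) by auto
  then show ?case using Suc.IH[of "Suc m'"] yz(2) m'(1) by auto
qed

lemma limit_orbit_shadowed:
  assumes "converges_along s e p" "0 < \<eta>"
  obtains n where "\<And>j. j \<le> N \<Longrightarrow> E (s n + j) = e j \<and> \<bar>X (s n + j) - p j\<bar> < \<eta>"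
proof -
  have "\<forall>\<^sub>F n in sequentially. \<forall>j\<in>{..N}. E (s n + j) = e j \<and> dist (X (s n + j)) (p j) < \<eta>"
    using assms unfolding converges_along_def
    by (intro eventually_ball_finite ballI eventually_conj) (auto intro: tendstoD)
  then show thesis
    using that eventually_happens'[OF trivial_limit_sequentially] by (fastforce simp: dist_real_def)
qed

text \<open>A periodic limit orbit is a cycle that the orbit shadows arbitrarily well. Run the cycle
  backwards over an even number of periods: the orbit then stays trapped near the cycle all the way
  down to time \<open>0\<close>, which is impossible unless the cycle passes through the start \<open>(1, d\<^sub>1)\<close>.\<close>

lemma periodic_limit_orbit_visits_start:
  assumes conv: "converges_along s e p" and "0 < P"
    and per: "\<And>m. k \<le> m \<Longrightarrow> e (m + P) = e m \<and> p (m + P) = p m"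
  shows "\<exists>m. e m = 1 \<and> p m = d$1"
proof (rule ccontr)
  assume avoid: "\<nexists>m. e m = 1 \<and> p m = d$1"
  define Q where "Q = 2 * P"
  define ce where "ce m = e (k + Q - m)" for m
  define cp where "cp m = p (k + Q - m)" for m
  have cyc: "step (ce m) (cp m) (ce (Suc m)) (cp (Suc m))" if "m < Q" for m
  proof -
    have "k + Q - m = Suc (k + Q - Suc m)" using that by simp
    then show ?thesis unfolding ce_def cp_def using limit_orbit_step[OF conv] by simp
  qed
  have closes: "0 < Q" "ce Q = ce 0" "cp Q = cp 0"
    using \<open>0 < P\<close> per[of k] per[of "k + P"] unfolding ce_def cp_def Q_def by (simp_all add: mult_2 add.assoc)
  define \<eta> where "\<eta> = Min (insert 1 ((\<lambda>m. \<bar>cp m - d$1\<bar>) ` {m. m \<le> Q \<and> ce m = 1}))"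
  have \<eta>: "0 < \<eta>" "\<And>m. m \<le> Q \<Longrightarrow> ce m = 1 \<Longrightarrow> \<eta> \<le> \<bar>cp m - d$1\<bar>"
    unfolding \<eta>_def using avoid by (auto simp: Min_gr_iff ce_def cp_def)
  obtain n where n: "\<And>j. j \<le> k + Q \<Longrightarrow> E (s n + j) = e j \<and> \<bar>X (s n + j) - p j\<bar> < \<eta>"
    using limit_orbit_shadowed[OF conv \<eta>(1)] by blast
  define y where "y m = X (s n + (k + Q - m))" for m
  have y: "step (ce m) (y m) (ce (Suc m)) (y (Suc m))" if "m < Q" for m
  proof -
    have "s n + (k + Q - m) = Suc (s n + (k + Q - Suc m))" using that by simp
    then show ?thesis
      using orbit_step[of "s n + (k + Q - Suc m)"] n[of "k + Q - m"] n[of "k + Q - Suc m"]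
      unfolding y_def ce_def by simp
  qed
  have "y Q - cp Q \<in> closed_segment 0 (y 0 - cp 0)"
    by (rule same_itinerary_even_segment[where e = ce, OF cyc y]) (auto simp: Q_def)
  then have "y Q \<in> closed_segment (cp 0) (y 0)"
    using closes by (auto simp: closed_segment_eq_real_ivl split: if_splits)
  moreover have "E (s n + (k + Q)) = ce 0" using n[of "k + Q"] unfolding ce_def by simp
  ultimately obtain m where m: "m \<le> Q" "E 0 = ce m" "X 0 \<in> closed_segment (cp m) (y m)"
    using orbit_trapped_by_cycle[OF cyc y closes, of 0 "s n + (k + Q)"] unfolding y_def by auto
  have "\<bar>X 0 - cp m\<bar> \<le> \<bar>y m - cp m\<bar>" using segment_bound1[OF m(3)] by simp
  also have "\<dots> < \<eta>" using n[of "k + Q - m"] unfolding y_def cp_def by simp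
  also have "\<dots> \<le> \<bar>cp m - d$1\<bar>" using \<eta>(2)[OF m(1)] m(2) orbit_start by simp
  finally show False using orbit_start by (simp add: abs_minus_commute)
qed

lemma approach_sequence:
  assumes "\<not> (\<exists>\<delta>>0. \<forall>t\<ge>1. E t = i \<longrightarrow> \<delta> \<le> \<bar>X t - d$i\<bar>)"
  obtains s where "\<And>n. 1 \<le> s n" "\<And>n. E (s n) = i" "(\<lambda>n. X (s n)) \<longlonglongrightarrow> d$i"
proof -
  have "\<exists>t. 1 \<le> t \<and> E t = i \<and> \<bar>X t - d$i\<bar> < inverse (real (Suc n))" for n
  proof -
    have "0 < inverse (real (Suc n))" by simp
    from assms this have "\<not> (\<forall>t\<ge>1. E t = i \<longrightarrow> inverse (real (Suc n)) \<le> \<bar>X t - d$i\<bar>)"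
      by blast
    then show ?thesis by (auto simp: not_le)
  qed
  then have "\<forall>n. \<exists>t. 1 \<le> t \<and> E t = i \<and> \<bar>X t - d$i\<bar> < inverse (real (Suc n))" ..
  from choice[OF this] obtain s
    where "\<forall>n. 1 \<le> s n \<and> E (s n) = i \<and> \<bar>X (s n) - d$i\<bar> < inverse (real (Suc n))" ..
  then have s: "\<And>n. 1 \<le> s n" "\<And>n. E (s n) = i"
    "\<And>n. \<bar>X (s n) - d$i\<bar> < inverse (real (Suc n))" by auto
  have "\<forall>\<^sub>F n in sequentially. norm (X (s n) - d$i) \<le> inverse (real (Suc n))"
    using s(3) by (intro always_eventually allI) (simp add: less_imp_le)
  then have "(\<lambda>n. X (s n) - d$i) \<longlonglongrightarrow> 0"
    by (rule Lim_null_comparison[OF _ LIMSEQ_inverse_real_of_nat])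
  then have "(\<lambda>n. X (s n)) \<longlonglongrightarrow> d$i" by (rule LIM_zero_cancel)
  with s(1,2) show thesis by (rule that)
qed

text \<open>If \<open>d\<^sub>1\<close> were isolated on the orbit, the orbit could not return close to \<open>d\<^sub>2\<close> or
  \<open>d\<^sub>3\<close> either: a limit of such returns would be a backward orbit of \<open>d\<^sub>i\<close>, hence eventually
  periodic, and would have to pass through \<open>(1, d\<^sub>1)\<close>.\<close>

lemma decision_point_isolated:
  assumes "\<not> accumulates 0" "i \<noteq> 1"
  shows "\<exists>\<delta>>0. \<forall>t\<ge>1. E t = i \<longrightarrow> \<delta> \<le> \<bar>X t - d$i\<bar>"
proof (rule ccontr)
  assume "\<not> ?thesis"
  then obtain s where s: "\<And>n. 1 \<le> s n" "\<And>n. E (s n) = i" "(\<lambda>n. X (s n)) \<longlonglongrightarrow> d$i"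
    using approach_sequence by blast
  then obtain e p where conv: "converges_along s e p" "e 0 = i" "p 0 = d$i"
    using limit_orbit_exists[of s i] by blast
  note orbit = limit_orbit_step[OF conv(1)]
  have fin: "finite (range (\<lambda>k. (e k, p k)))"
    using finite_backward_orbits[OF assms(2) conv(2,3) orbit] .
  have succ: "(e (Suc k), p (Suc k)) = (e (Suc l), p (Suc l))" if "(e k, p k) = (e l, p l)" for k l
    using that by (rule backward_orbit_succ_eq[where e = e and p = p, OF orbit])
  obtain P k where P: "0 < P" and "\<And>m. k \<le> m \<Longrightarrow> (e (m + P), p (m + P)) = (e m, p m)"
    using eventually_periodic_if_finite_range[where u = "\<lambda>k. (e k, p k)", OF succ fin] by metis
  then have per: "\<And>m. k \<le> m \<Longrightarrow> e (m + P) = e m \<and> p (m + P) = p m" by simp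
  obtain m where "e m = 1" "p m = d$1"
    using periodic_limit_orbit_visits_start[OF conv(1) P per] by blast
  then show False using limit_orbit_visits_start[OF conv(1) s(1)] assms(1) by blast
qed

lemma accumulates_start: "accumulates 0"
proof (rule ccontr)
  assume isolated: "\<not> accumulates 0"
  obtain \<delta>\<^sub>2 \<delta>\<^sub>3 where \<delta>: "0 < \<delta>\<^sub>2" "0 < \<delta>\<^sub>3"
    "\<And>t. 1 \<le> t \<Longrightarrow> E t = 2 \<Longrightarrow> \<delta>\<^sub>2 \<le> \<bar>X t - d$2\<bar>"
    "\<And>t. 1 \<le> t \<Longrightarrow> E t = 3 \<Longrightarrow> \<delta>\<^sub>3 \<le> \<bar>X t - d$3\<bar>"
    using decision_point_isolated[OF isolated, of 2] decision_point_isolated[OF isolated, of 3] by auto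
  have "accumulates 0" unfolding accumulates_def
  proof (intro allI impI)
    fix \<epsilon> :: real assume "0 < \<epsilon>"
    then obtain t where t: "1 \<le> t" "\<bar>X t - d$(E t)\<bar> < min \<epsilon> (min \<delta>\<^sub>2 \<delta>\<^sub>3)"
      using returns_near_decision_point[of "min \<epsilon> (min \<delta>\<^sub>2 \<delta>\<^sub>3)"] \<delta>(1,2) by auto
    then have "E t \<noteq> 2" "E t \<noteq> 3" using \<delta>(3,4)[OF t(1)] by force+
    then have "E t = 1" using exhaust_3[of "E t"] by blast
    then show "\<exists>s. s \<noteq> 0 \<and> E s = E 0 \<and> \<bar>X s - X 0\<bar> < \<epsilon>"
      using t orbit_start by (intro exI[of _ t]) auto
  qed
  with isolated show False ..
qed

lemma accumulates_everywhere: "accumulates t"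
proof (induction t)
  case 0
  show ?case by (rule accumulates_start)
next
  case (Suc t)
  then show ?case by (rule accumulates_Suc)
qed

lemma orbit_point_islimpt: "pt (X t) (E t) islimpt range (\<lambda>s. pt (X s) (E s))"
  unfolding islimpt_approachable
proof (intro allI impI)
  fix \<epsilon> :: real assume "0 < \<epsilon>"
  then have "0 < \<epsilon> / 2" by simp
  then obtain s where s: "s \<noteq> t" "E s = E t" "\<bar>X s - X t\<bar> < \<epsilon> / 2"
    using accumulates_everywhere[of t] unfolding accumulates_def by blast
  have "pt (X s) (E s) \<noteq> pt (X t) (E t)" using pt_inj orbit_bounds orbit_eq s(1) by metis
  moreover have "dist (pt (X s) (E s)) (pt (X t) (E t)) < \<epsilon>"
    using dist_pt[of "X s" "E t" "X t"] s(2,3) by simp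
  ultimately show "\<exists>x'\<in>range (\<lambda>s. pt (X s) (E s)). x' \<noteq> pt (X t) (E t) \<and> dist x' (pt (X t) (E t)) < \<epsilon>"
    by blast
qed

end

theorem lemma5p2:
  fixes \<rho> d :: "real^3"
  assumes rho_pos: "\<And>i. 0 < \<rho>$i" and rho_lt1: "\<And>i. \<rho>$i < 1"
    and rho_sum: "\<rho>$1 + \<rho>$2 + \<rho>$3 > 1"
    and rho_pair: "\<And>i j. i \<noteq> j \<Longrightarrow> \<rho>$i + \<rho>$j \<le> 1"
    and d_pos: "\<And>i. 0 < d$i" and d_lt1: "\<And>i. d$i < 1"
    and inf1: "infinite (preimages \<rho> d (pt (d$1) 1))"
    and fin2: "finite (preimages \<rho> d (pt (d$2) 2))"
    and fin3: "finite (preimages \<rho> d (pt (d$3) 3))"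
  shows "\<forall>u \<in> P1 \<rho> d. u islimpt P1 \<rho> d"
proof -
  interpret switching_system \<rho> d
    by unfold_locales (fact rho_pos rho_lt1 rho_sum rho_pair d_pos d_lt1)+
  obtain u where u: "u 0 = pt (d$1) 1" "\<And>t. u t \<in> phi \<rho> d (u (Suc t))" "inj u" "range u = P1 \<rho> d"
    using backward_chain[OF inf1] unfolding P1_def by metis
  obtain E X where EX: "\<And>t. u t = pt (X t) (E t)" "\<And>t. step (E (Suc t)) (X (Suc t)) (E t) (X t)"
    using orbit_coordinates[of u] u(2) by metis
  have "E 0 = 1" "X 0 = d$1" using pt_inj[of "d$1" 1] d_pos d_lt1 u(1) EX(1)[of 0] by metis+
  moreover have "inj (\<lambda>t. (E t, X t))" using u(3) EX(1) by (auto simp: inj_def)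
  moreover have "finite (range (\<lambda>k. (e k, p k)))"
    if "i \<noteq> 1" "e 0 = i" "p 0 = d$i" "\<And>k. step (e (Suc k)) (p (Suc k)) (e k) (p k)" for i e p
    using finite_backward_orbit[OF _ that(2-4)] fin2 fin3 that(1) exhaust_3[of i] by auto
  ultimately interpret backward_orbit \<rho> d E X
    using EX(2) by unfold_locales auto
  have "P1 \<rho> d = range (\<lambda>s. pt (X s) (E s))" using u(4) EX(1) by (metis image_cong)
  then show ?thesis using orbit_point_islimpt by auto
qed

end
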